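(* Let $n\ge2$ and $W_n=(w_{ij},\ 1\le j<i\le n)$ be a triangular array of positive reals. Then $T_n=T^\triangle_n(W_n)$ satisfies $$\mathcal{E}^\triangle(T_n)=\sum_{1\le j<i\le n}\frac1{w_{ij}}.$$
   Context: Triangular arrays are $X=(x_{ij},\ 1\le j<i\le n)$ of positive reals. Local maps (same formulas as for matrices): for $i\ge3$, $l_{i1}$ replaces $x_{i1}$ by $x_{i-1,1}x_{i1}$; for $2\le j$ with $j+1<i$, $l_{ij}$ replaces $(x_{i-1,j-1},x_{i-1,j},x_{i,j-1},x_{ij})=(a,b,c,d)$ by $(bc/(ab+ac),b,c,d(b+c))$, other entries unchanged. For $1\le j\le n-2$ let $\rho^n_j=l_{n-j+1,1}\circ l_{n-j+2,2}\circ\cdots\circ l_{n-1,j-1}\circ l_{nj}$, and set $\rho^{\triangle,n}_j=\rho^n_j$. Let $r^\triangle_{n,n-1}$ replace $x_{n,n-1}$ by $1/x_{n,n-1}$. With conventions $x_{i0}=1$ and $x_{n+1,n-1}=1$: for $k=0,1,\dots,\lfloor n/2\rfloor-1$, $b^{\triangle,n}_{n-2k,n-2k-1}$ replaces $x_{n-2k,n-2k-1}$ by $x_{n-2k+1,n-2k-1}x_{n-2k,n-2k-2}/x_{n-2k,n-2k-1}$; for $k=1,\dots,\lfloor (n-1)/2\rfloor$, $b^{\triangle,n}_{n-2k+1,n-2k}$ is the identity. Set $\rho^{\triangle,n}_{n-1}=b^{\triangle,n}_{2,1}\circ\cdots\circ b^{\triangle,n}_{n-1,n-2}\circ b^{\triangle,n}_{n,n-1}\circ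 r^\triangle_{n,n-1}$ and $R^\triangle_n=\rho^{\triangle,n}_{n-1}\circ\cdots\circ\rho^{\triangle,n}_1$. Define $T^\triangle_2(x_{21})=x_{21}$ and for $n\ge3$, $T^\triangle_n(X_n)=R^\triangle_n\begin{pmatrix}T^\triangle_{n-1}(X_{n-1})\\ x_{n1}\ \cdots\ x_{n,n-1}\end{pmatrix}$, where $X_{n-1}=(x_{ij},\ 1\le j<i\le n-1)$ and the last row $(x_{n1},\dots,x_{n,n-1})$ is appended. For a triangular array, $\mathcal{E}^\triangle(X)=\frac1{x_{21}}+\sum_{1\le j<i\le n}\frac{x_{i-1,j}+x_{i,j-1}}{x_{ij}}$ with $x_{i0}=x_{ii}=0$ in this sum. *)

theory Defs
  imports Complex_Main
begin

text \<open>A triangular array (x i j, 1 <= j < i <= n) is modelled as a function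
  nat => nat => real; entries outside the triangle are irrelevant.\<close>

type_synonym tarr = "nat \<Rightarrow> nat \<Rightarrow> real"

definition upd2 :: "tarr \<Rightarrow> nat \<Rightarrow> nat \<Rightarrow> real \<Rightarrow> tarr" where
  "upd2 X i j v = (\<lambda>a b. if a = i \<and> b = j then v else X a b)"

definition lmap :: "nat \<Rightarrow> nat \<Rightarrow> tarr \<Rightarrow> tarr" where
  "lmap i j X =
    (if j = 1 then upd2 X i 1 (X (i-1) 1 * X i 1)
     else (let a = X (i-1) (j-1); b = X (i-1) j; c = X i (j-1); d = X i j
           in upd2 (upd2 X (i-1) (j-1) (b*c/(a*b + a*c))) i j (d*(b+c))))"

text \<open>rho^n_j = l_{n-j+1,1} o l_{n-j+2,2} o ... o l_{n,j}  (l_{n,j} applied first).\<close>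
definition rho :: "nat \<Rightarrow> nat \<Rightarrow> tarr \<Rightarrow> tarr" where
  "rho n j X = fold (\<lambda>k Y. lmap (n-j+k) k Y) (rev [1..<j+1]) X"

definition rtri :: "nat \<Rightarrow> tarr \<Rightarrow> tarr" where
  "rtri n X = upd2 X n (n-1) (1 / X n (n-1))"

definition getx :: "nat \<Rightarrow> tarr \<Rightarrow> nat \<Rightarrow> nat \<Rightarrow> real" where
  "getx n X i j = (if j = 0 then 1 else if i = n+1 \<and> j = n-1 then 1 else X i j)"

text \<open>b^{triangle,n}_{m,m-1}: nontrivial iff m = n - 2k with 0 <= k <= floor(n/2)-1,
  i.e. 2 <= m <= n and n - m even; identity otherwise.\<close>
definition bmap :: "nat \<Rightarrow> nat \<Rightarrow> tarr \<Rightarrow> tarr" where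
  "bmap n m X =
    (if 2 \<le> m \<and> m \<le> n \<and> even (n - m)
     then upd2 X m (m-1) (getx n X (m+1) (m-1) * getx n X m (m-2) / X m (m-1))
     else X)"

text \<open>rho^{triangle,n}_{n-1} = b_{2,1} o ... o b_{n,n-1} o r.\<close>
definition rholast :: "nat \<Rightarrow> tarr \<Rightarrow> tarr" where
  "rholast n X = fold (\<lambda>m Y. bmap n m Y) (rev [2..<n+1]) (rtri n X)"

definition Rtri :: "nat \<Rightarrow> tarr \<Rightarrow> tarr" where
  "Rtri n X = rholast n (fold (\<lambda>j Y. rho n j Y) [1..<n-1] X)"

fun Ttri :: "nat \<Rightarrow> tarr \<Rightarrow> tarr" where
  "Ttri 0 X = X"
| "Ttri (Suc 0) X = X"
| "Ttri (Suc (Suc 0)) X = X"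
| "Ttri (Suc (Suc (Suc m))) X =
     Rtri (m+3) (\<lambda>i j. if i < m+3 then Ttri (m+2) X i j else X i j)"

text \<open>Energy, with x_{i0} = x_{ii} = 0.\<close>
definition Etri :: "nat \<Rightarrow> tarr \<Rightarrow> real" where
  "Etri n X = 1 / X 2 1 +
     (\<Sum>i\<in>{1..n}. \<Sum>j\<in>{1..<i}.
        ((if j \<ge> i - 1 then 0 else X (i-1) j) + (if j - 1 = 0 then 0 else X i (j-1))) / X i j)"

end

theory Submission
  imports Defs
begin

text \<open>Once T_{n-1} has acted on the first n-1 rows, the energy of these
  rows plus the reciprocals 1/x_{nj} of the new row equals the claimed sum. This quantity is
  the cut energy with cut m = 0, where row n contributes (x_{n-1,j} + x_{n,j-1}) / x_{nj} for
  j \<le> m and 1/x_{nj} for j > m; with cut m = n-1 it is the energy of the whole array. Each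
  \<rho>_j advances the cut from j-1 to j without changing the cut energy, and so does \<rho>_{n-1}
  from n-2 to n-1. Multiplying x_{nj} by its neighbour sum turns 1/x_{nj} into the energy term;
  every other change replaces one entry t by S/(H t), where S/t + H t + const is the cut energy
  as a function of that entry.\<close>

definition nbr_sum :: "tarr \<Rightarrow> nat \<Rightarrow> nat \<Rightarrow> real" where
  "nbr_sum X i j = (if j \<ge> i - 1 then 0 else X (i-1) j) + (if j - 1 = 0 then 0 else X i (j-1))"

definition energy_term :: "tarr \<Rightarrow> nat \<Rightarrow> nat \<Rightarrow> real" where
  "energy_term X i j = nbr_sum X i j / X i j"

definition cut_term :: "nat \<Rightarrow> nat \<Rightarrow> tarr \<Rightarrow> nat \<Rightarrow> nat \<Rightarrow> real" where
  "cut_term n m X i j = (if i < n \<or> j \<le> m then energy_term X i j else 1 / X i j)"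

definition cut_energy :: "nat \<Rightarrow> nat \<Rightarrow> tarr \<Rightarrow> real" where
  "cut_energy n m X = 1 / X 2 1 + (\<Sum>i\<in>{1..n}. \<Sum>j\<in>{1..<i}. cut_term n m X i j)"

definition tri_idx :: "nat \<Rightarrow> (nat \<times> nat) set" where
  "tri_idx n = (SIGMA i:{1..n}. {1..<i})"

definition tri_pos :: "nat \<Rightarrow> tarr \<Rightarrow> bool" where
  "tri_pos n X \<longleftrightarrow> (\<forall>i j. 1 \<le> j \<longrightarrow> j < i \<longrightarrow> i \<le> n \<longrightarrow> X i j > 0)"

definition scale_nbr :: "nat \<Rightarrow> nat \<Rightarrow> tarr \<Rightarrow> tarr" where
  "scale_nbr i j X = upd2 X i j (X i j * nbr_sum X i j)"

lemma tri_posD: "tri_pos n X \<Longrightarrow> 1 \<le> j \<Longrightarrow> j < i \<Longrightarrow> i \<le> n \<Longrightarrow> X i j > 0"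
  by (simp add: tri_pos_def)

lemma tri_pos_mono: "tri_pos n X \<Longrightarrow> k \<le> n \<Longrightarrow> tri_pos k X"
  by (simp add: tri_pos_def)

lemma tri_pos_upd2:
  "tri_pos n X \<Longrightarrow> (1 \<le> q \<Longrightarrow> q < p \<Longrightarrow> p \<le> n \<Longrightarrow> v > 0) \<Longrightarrow> tri_pos n (upd2 X p q v)"
  by (simp add: tri_pos_def upd2_def)

lemma nbr_sum_pos:
  assumes X: "tri_pos n X" and ij: "1 \<le> j" "j < i" "i \<le> n" "i \<noteq> 2"
  shows "nbr_sum X i j > 0"
proof (cases "j < i - 1")
  case True
  then have "X (i-1) j > 0" "j - 1 \<noteq> 0 \<Longrightarrow> X i (j-1) > 0"
    using ij by (auto intro: tri_posD[OF X])
  with True show ?thesis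
    by (cases "j - 1 = 0") (auto simp: nbr_sum_def)
next
  case False
  with ij have "2 \<le> j" by auto
  with ij have "X i (j-1) > 0" by (auto intro: tri_posD[OF X])
  with False \<open>2 \<le> j\<close> show ?thesis by (simp add: nbr_sum_def)
qed

lemma tri_pos_scale_nbr:
  "tri_pos n X \<Longrightarrow> 1 \<le> j \<Longrightarrow> j < i \<Longrightarrow> i \<le> n \<Longrightarrow> i \<noteq> 2 \<Longrightarrow> tri_pos n (scale_nbr i j X)"
  unfolding scale_nbr_def by (auto intro!: tri_pos_upd2 mult_pos_pos intro: tri_posD nbr_sum_pos)

lemma tri_pos_lmap:
  assumes X: "tri_pos n X" and k: "1 \<le> k" "k + 1 < i" "i \<le> n"
  shows "tri_pos n (lmap i k X)"
proof (cases "k = 1")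
  case True
  have "X (i-1) 1 > 0" "X i 1 > 0" using k True by (auto intro: tri_posD[OF X])
  with True X show ?thesis by (auto simp: lmap_def intro!: tri_pos_upd2)
next
  case False
  define a b c d where "a = X (i-1) (k-1)" and "b = X (i-1) k" and "c = X i (k-1)" and "d = X i k"
  have "a > 0" "b > 0" "c > 0" "d > 0"
    using k False by (auto simp: a_def b_def c_def d_def intro: tri_posD[OF X])
  then have "b * c / (a * b + a * c) > 0" "d * (b + c) > 0"
    by (simp_all add: add_pos_pos)
  moreover have "lmap i k X = upd2 (upd2 X (i-1) (k-1) (b * c / (a * b + a * c))) i k (d * (b + c))"
    using False by (simp add: lmap_def Let_def a_def b_def c_def d_def)
  ultimately show ?thesis
    using X by (simp add: tri_pos_upd2)
qed

lemma tri_pos_rho: "tri_pos n X \<Longrightarrow> j + 1 < n \<Longrightarrow> tri_pos n (rho n j X)"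
  unfolding rho_def
  by (rule fold_invariant[where P = "tri_pos n" and Q = "\<lambda>k. 1 \<le> k \<and> k \<le> j"])
    (auto intro: tri_pos_lmap)

lemma tri_pos_fold_rho:
  "tri_pos n X \<Longrightarrow> \<forall>j\<in>set js. j + 1 < n \<Longrightarrow> tri_pos n (fold (\<lambda>j Y. rho n j Y) js X)"
  by (rule fold_invariant[where P = "tri_pos n" and Q = "\<lambda>j. j + 1 < n"]) (auto intro: tri_pos_rho)

lemma tri_pos_bmap:
  assumes X: "tri_pos n X"
  shows "tri_pos n (bmap n m X)"
proof (cases "2 \<le> m \<and> m \<le> n \<and> even (n - m)")
  case True
  then have "getx n X (m+1) (m-1) > 0" "getx n X m (m-2) > 0" "X m (m-1) > 0"
    by (auto simp: getx_def intro: tri_posD[OF X])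
  with True X show ?thesis
    by (simp add: bmap_def tri_pos_upd2)
next
  case False
  with X show ?thesis
    unfolding bmap_def by (simp only: if_False)
qed

lemma tri_pos_rtri: "tri_pos n X \<Longrightarrow> tri_pos n (rtri n X)"
  unfolding rtri_def by (rule tri_pos_upd2) (simp_all add: tri_posD)

lemma tri_pos_Rtri:
  assumes "tri_pos n X"
  shows "tri_pos n (Rtri n X)"
proof -
  have "tri_pos n (rtri n (fold (\<lambda>j Y. rho n j Y) [1..<n-1] X))"
    using assms by (intro tri_pos_rtri tri_pos_fold_rho) auto
  then show ?thesis
    unfolding Rtri_def rholast_def
    by (intro fold_invariant[where P = "tri_pos n" and Q = "\<lambda>_. True"] tri_pos_bmap) auto
qed

lemma cut_energy_tri_idx:
  "cut_energy n m X = 1 / X 2 1 + (\<Sum>(i,j)\<in>tri_idx n. cut_term n m X i j)"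
  by (simp add: cut_energy_def tri_idx_def sum.Sigma)

lemma Etri_eq_cut_energy: "Etri n X = cut_energy n (n-1) X"
  unfolding Etri_def cut_energy_def
  by (intro arg_cong2[where f = "(+)"] refl sum.cong)
    (auto simp: cut_term_def energy_term_def nbr_sum_def)

lemma nbr_sum_upd2_other:
  assumes "(i-1,j) \<noteq> (p,q)" "(i,j-1) \<noteq> (p,q)"
  shows "nbr_sum (upd2 X p q v) i j = nbr_sum X i j"
proof -
  have "upd2 X p q v (i-1) j = X (i-1) j" "upd2 X p q v i (j-1) = X i (j-1)"
    using assms by (auto simp: upd2_def)
  then show ?thesis by (simp add: nbr_sum_def)
qed

lemma cut_term_upd2_other:
  assumes "(i,j) \<in> tri_idx n" "1 \<le> q"
    and "(i,j) \<noteq> (p,q)" "(i,j) \<noteq> (p,q+1)" "(i,j) \<noteq> (p+1,q)"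
  shows "cut_term n m (upd2 X p q v) i j = cut_term n m X i j"
proof -
  have "1 \<le> j" "j < i" using assms(1) by (auto simp: tri_idx_def)
  with assms have "nbr_sum (upd2 X p q v) i j = nbr_sum X i j"
    by (intro nbr_sum_upd2_other) auto
  moreover have "upd2 X p q v i j = X i j"
    using assms(3) by (auto simp: upd2_def)
  ultimately show ?thesis
    by (simp add: cut_term_def energy_term_def)
qed

lemma cut_energy_scale_nbr:
  assumes X: "tri_pos n X" and j: "1 \<le> j" "j < n" and n: "3 \<le> n"
  shows "cut_energy n j (scale_nbr n j X) = cut_energy n (j-1) X"
proof -
  define s where "s = nbr_sum X n j"
  have "s > 0" "X n j > 0"
    using j n by (auto simp: s_def intro: nbr_sum_pos[OF X] tri_posD[OF X])
  have S: "scale_nbr n j X = upd2 X n j (X n j * s)"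
    by (simp add: scale_nbr_def s_def)
  have "cut_term n j (scale_nbr n j X) i k = cut_term n (j-1) X i k"
    if ik: "(i,k) \<in> tri_idx n" for i k
  proof -
    consider "(i,k) = (n,j)" | "(i,k) = (n,j+1)" | "(i,k) \<noteq> (n,j)" "(i,k) \<noteq> (n,j+1)"
      by blast
    then show ?thesis
    proof cases
      case 1
      have "nbr_sum (scale_nbr n j X) n j = s"
        using j by (simp add: S s_def nbr_sum_upd2_other)
      with 1 \<open>s > 0\<close> \<open>X n j > 0\<close> j show ?thesis
        by (auto simp: cut_term_def energy_term_def S upd2_def)
    next
      case 2
      then show ?thesis by (auto simp: cut_term_def S upd2_def)
    next
      case 3
      with ik j have "i < n \<or> k \<le> j - 1 \<or> k > j + 1"
        by (auto simp: tri_idx_def)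
      with ik j 3 show ?thesis
        unfolding S by (subst cut_term_upd2_other) (auto simp: tri_idx_def cut_term_def)
    qed
  qed
  moreover have "scale_nbr n j X 2 1 = X 2 1"
    using n by (simp add: S upd2_def)
  ultimately show ?thesis
    unfolding cut_energy_tri_idx by (auto intro!: sum.cong)
qed

lemma cut_term_upd2_diff:
  assumes ij: "(i,j) \<in> tri_idx n" and q: "1 \<le> q" "q < p" "p < n" and cut: "p + 1 < n \<or> q \<le> m"
  shows "cut_term n m (upd2 X p q t) i j - cut_term n m (upd2 X p q t') i j
    = (if (i,j) = (p,q) then nbr_sum X p q * (1/t - 1/t') else 0)
      + (if (i,j) = (p,q+1) then (t - t') / X p (q+1) else 0)
      + (if (i,j) = (p+1,q) then (t - t') / X (p+1) q else 0)"
proof -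
  consider "(i,j) = (p,q)" | "(i,j) = (p,q+1)" | "(i,j) = (p+1,q)"
    | "(i,j) \<noteq> (p,q)" "(i,j) \<noteq> (p,q+1)" "(i,j) \<noteq> (p+1,q)"
    by blast
  then show ?thesis
  proof cases
    case 1
    have "nbr_sum (upd2 X p q v) p q = nbr_sum X p q" for v
      using q by (simp add: nbr_sum_upd2_other)
    with 1 q show ?thesis
      by (simp add: cut_term_def energy_term_def upd2_def diff_divide_distrib right_diff_distrib)
  next
    case 2
    with ij have "q + 1 < p" by (simp add: tri_idx_def)
    define u where "u = (if q + 1 \<ge> p - 1 then 0 else X (p-1) (q+1))"
    have "nbr_sum (upd2 X p q v) p (q+1) = u + v" for v
      using q \<open>q + 1 < p\<close> by (simp add: nbr_sum_def upd2_def u_def)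
    with 2 q show ?thesis
      by (simp add: cut_term_def energy_term_def upd2_def add_divide_distrib diff_divide_distrib)
  next
    case 3
    define u where "u = (if q - 1 = 0 then 0 else X (p+1) (q-1))"
    have "nbr_sum (upd2 X p q v) (p+1) q = v + u" for v
      using q by (simp add: nbr_sum_def upd2_def u_def)
    with 3 q cut show ?thesis
      by (auto simp: cut_term_def energy_term_def upd2_def add_divide_distrib diff_divide_distrib)
  next
    case 4
    with ij q show ?thesis
      by (auto simp: cut_term_upd2_other)
  qed
qed

text \<open>The summand 1 for p = 2 comes from the extra term 1/x_21 of the energy.\<close>

lemma cut_energy_upd2_diff:
  assumes q: "1 \<le> q" "q < p" "p < n" and cut: "p + 1 < n \<or> q \<le> m"
  shows "cut_energy n m (upd2 X p q t) - cut_energy n m (upd2 X p q t') =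
    (nbr_sum X p q + (if p = 2 then 1 else 0)) * (1 / t - 1 / t')
    + ((if q + 1 < p then 1 / X p (q+1) else 0) + 1 / X (p+1) q) * (t - t')"
proof -
  define s where "s = nbr_sum X p q"
  have mem: "(p,q) \<in> tri_idx n" "(p+1,q) \<in> tri_idx n" "(p,q+1) \<in> tri_idx n \<longleftrightarrow> q + 1 < p"
    using q by (auto simp: tri_idx_def)
  have "(\<Sum>(i,j)\<in>tri_idx n. cut_term n m (upd2 X p q t) i j)
      - (\<Sum>(i,j)\<in>tri_idx n. cut_term n m (upd2 X p q t') i j)
    = (\<Sum>w\<in>tri_idx n. (if w = (p,q) then s * (1/t - 1/t') else 0)
        + (if w = (p,q+1) then (t - t') / X p (q+1) else 0)
        + (if w = (p+1,q) then (t - t') / X (p+1) q else 0))"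
    unfolding sum_subtractf[symmetric] s_def
    by (intro sum.cong refl) (auto simp only: split_paired_all prod.case cut_term_upd2_diff[OF _ q cut])
  also have "\<dots> = s * (1/t - 1/t') + (if q + 1 < p then (t - t') / X p (q+1) else 0)
      + (t - t') / X (p+1) q"
    using mem by (simp add: sum.distrib sum.delta tri_idx_def)
  finally have "cut_energy n m (upd2 X p q t) - cut_energy n m (upd2 X p q t')
      = (1 / upd2 X p q t 2 1 - 1 / upd2 X p q t' 2 1) + (s * (1/t - 1/t')
        + (if q + 1 < p then (t - t') / X p (q+1) else 0) + (t - t') / X (p+1) q)"
    by (simp add: cut_energy_tri_idx)
  also have "1 / upd2 X p q t 2 1 - 1 / upd2 X p q t' 2 1 = (if p = 2 then 1/t - 1/t' else 0)"
    using q by (auto simp: upd2_def)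
  also have "(if p = 2 then 1/t - 1/t' else 0) + (s * (1/t - 1/t')
      + (if q + 1 < p then (t - t') / X p (q+1) else 0) + (t - t') / X (p+1) q)
    = (s + (if p = 2 then 1 else 0)) * (1 / t - 1 / t')
      + ((if q + 1 < p then 1 / X p (q+1) else 0) + 1 / X (p+1) q) * (t - t')"
    by (simp add: algebra_simps divide_inverse)
  finally show ?thesis
    unfolding s_def .
qed

lemma upd2_upd2_same: "upd2 (upd2 X p q v) p q w = upd2 X p q w"
  by (simp add: upd2_def fun_eq_iff)

lemma upd2_self: "upd2 X p q (X p q) = X"
  by (simp add: upd2_def fun_eq_iff)

text \<open>As a function of the entry t, the cut energy is S/t + H t + const, and S/t + H t takes
  the same value at t and at t' = S/(H t).\<close>

lemma cut_energy_upd2_swap: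
  assumes pq: "1 \<le> q" "q < p" "p < n" "p + 1 < n \<or> q \<le> m"
    and t: "t \<noteq> 0" "t' \<noteq> 0"
    and prod: "t * t' * ((if q + 1 < p then 1 / X p (q+1) else 0) + 1 / X (p+1) q)
      = nbr_sum X p q + (if p = 2 then 1 else 0)"
  shows "cut_energy n m (upd2 X p q t) = cut_energy n m (upd2 X p q t')"
proof -
  define H where "H = (if q + 1 < p then 1 / X p (q+1) else 0) + 1 / X (p+1) q"
  have "cut_energy n m (upd2 X p q t) - cut_energy n m (upd2 X p q t')
      = (t * t' * H) * (1 / t - 1 / t') + H * (t - t')"
    unfolding H_def prod by (rule cut_energy_upd2_diff[OF pq])
  also have "\<dots> = 0"
    using t by (simp add: field_simps)
  finally show ?thesis by simp
qed

lemma lmap_1_eq_scale_nbr: "3 \<le> i \<Longrightarrow> lmap i 1 Y = scale_nbr i 1 Y"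
  by (auto simp: lmap_def scale_nbr_def nbr_sum_def mult.commute)

lemma lmap_eq_upd2_scale_nbr:
  assumes "2 \<le> k" "k + 1 < i"
  shows "lmap i k Y = upd2 (scale_nbr i k Y) (i-1) (k-1)
    (Y (i-1) k * Y i (k-1) / (Y (i-1) (k-1) * Y (i-1) k + Y (i-1) (k-1) * Y i (k-1)))"
  using assms by (auto simp: lmap_def scale_nbr_def nbr_sum_def upd2_def Let_def fun_eq_iff)

lemma scale_nbr_lmap:
  assumes k: "2 \<le> k" "k + 1 < i"
  shows "scale_nbr (i-1) (k-1) (lmap i k Y) = upd2 (scale_nbr i k Y) (i-1) (k-1)
    (Y (i-1) k * Y i (k-1) / (Y (i-1) (k-1) * Y (i-1) k + Y (i-1) (k-1) * Y i (k-1))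
      * nbr_sum Y (i-1) (k-1))"
proof -
  define a' where "a' = Y (i-1) k * Y i (k-1) / (Y (i-1) (k-1) * Y (i-1) k + Y (i-1) (k-1) * Y i (k-1))"
  have L: "lmap i k Y = upd2 (scale_nbr i k Y) (i-1) (k-1) a'"
    unfolding a'_def by (rule lmap_eq_upd2_scale_nbr[OF k])
  then have "nbr_sum (lmap i k Y) (i-1) (k-1) = nbr_sum Y (i-1) (k-1)"
    using k by (simp add: scale_nbr_def nbr_sum_upd2_other)
  moreover have "lmap i k Y (i-1) (k-1) = a'"
    by (simp add: L upd2_def)
  ultimately have "scale_nbr (i-1) (k-1) (lmap i k Y)
      = upd2 (lmap i k Y) (i-1) (k-1) (a' * nbr_sum Y (i-1) (k-1))"
    by (simp add: scale_nbr_def)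
  also have "\<dots> = upd2 (scale_nbr i k Y) (i-1) (k-1) (a' * nbr_sum Y (i-1) (k-1))"
    by (simp add: L upd2_upd2_same)
  finally show ?thesis
    unfolding a'_def .
qed

text \<open>Up to cut energy, l_{ik} passes the pending scaling of x_{ik} by its neighbour sum on to
  x_{i-1,k-1}, where the next local map of \<rho>_j carries it out.\<close>

lemma cut_energy_lmap:
  assumes Y: "tri_pos n Y" and k: "2 \<le> k" "k + 1 < i" "i \<le> n" and cut: "i < n \<or> k - 1 \<le> m"
  shows "cut_energy n m (scale_nbr (i-1) (k-1) (lmap i k Y)) = cut_energy n m (scale_nbr i k Y)"
proof -
  define a b c where "a = Y (i-1) (k-1)" and "b = Y (i-1) k" and "c = Y i (k-1)"
  define a' s where "a' = b * c / (a * b + a * c)" and "s = nbr_sum Y (i-1) (k-1)"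
  define Z where "Z = scale_nbr i k Y"
  have Z: "Z (i-1) (k-1) = a" "Z (i-1) k = b" "Z i (k-1) = c"
    using k by (auto simp: Z_def scale_nbr_def upd2_def a_def b_def c_def)
  have "nbr_sum Z (i-1) (k-1) = s"
    using k by (simp add: Z_def scale_nbr_def s_def nbr_sum_upd2_other)
  have "a > 0" "b > 0" "c > 0" "s > 0"
    using k by (auto simp: a_def b_def c_def s_def intro: tri_posD[OF Y] nbr_sum_pos[OF Y])
  have "a' * a * (1 / b + 1 / c) = 1"
  proof -
    have "1 / b + 1 / c = (b + c) / (b * c)" "a * b + a * c = a * (b + c)" "b + c > 0"
      using \<open>b > 0\<close> \<open>c > 0\<close> by (simp_all add: field_simps)
    with \<open>a > 0\<close> \<open>b > 0\<close> \<open>c > 0\<close> show ?thesis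
      by (simp add: a'_def)
  qed
  then have "a' \<noteq> 0" "a' * s * a * (1 / b + 1 / c) = s"
    by (auto simp: ac_simps)
  moreover have "k - 1 + 1 < i - 1" "i - 1 + 1 = i" "k - 1 + 1 = k" "i - 1 \<noteq> 2"
    using k by auto
  ultimately have "cut_energy n m (upd2 Z (i-1) (k-1) (a' * s)) = cut_energy n m (upd2 Z (i-1) (k-1) a)"
    using k cut Z \<open>nbr_sum Z (i-1) (k-1) = s\<close> \<open>s > 0\<close> \<open>a > 0\<close>
    by (intro cut_energy_upd2_swap) auto
  moreover have "scale_nbr (i-1) (k-1) (lmap i k Y) = upd2 Z (i-1) (k-1) (a' * s)"
    using scale_nbr_lmap[OF k(1,2), of Y] by (simp add: Z_def a'_def a_def b_def c_def s_def)
  moreover have "upd2 Z (i-1) (k-1) a = Z"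
    using Z(1) upd2_self by metis
  ultimately show ?thesis
    by (simp add: Z_def)
qed

lemma cut_energy_fold_lmap:
  assumes j: "j + 1 < n" and t: "1 \<le> t"
  shows "tri_pos n Y \<Longrightarrow> t \<le> j \<Longrightarrow>
    cut_energy n j (fold (\<lambda>k Y. lmap (n-j+k) k Y) (rev [1..<t+1]) Y)
      = cut_energy n j (scale_nbr (n-j+t) t Y)"
  using t
proof (induction t arbitrary: Y rule: nat_induct_at_least)
  case base
  with j show ?case
    using lmap_1_eq_scale_nbr[of "n - j + 1" Y] by (simp add: Suc_diff_le)
next
  case (Suc t)
  let ?i = "n - j + Suc t" and ?f = "\<lambda>k Y. lmap (n-j+k) k Y"
  have "tri_pos n (lmap ?i (Suc t) Y)"
    using Suc j by (intro tri_pos_lmap) auto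
  then have "cut_energy n j (fold ?f (rev [1..<t+1]) (lmap ?i (Suc t) Y))
      = cut_energy n j (scale_nbr (n-j+t) t (lmap ?i (Suc t) Y))"
    using Suc by simp
  also have "\<dots> = cut_energy n j (scale_nbr ?i (Suc t) Y)"
    using cut_energy_lmap[of n Y "Suc t" ?i j] Suc j by simp
  finally show ?case
    by simp
qed

lemma cut_energy_rho:
  assumes X: "tri_pos n X" and j: "1 \<le> j" "j + 1 < n"
  shows "cut_energy n j (rho n j X) = cut_energy n (j-1) X"
  using cut_energy_fold_lmap[OF j(2) j(1) X] cut_energy_scale_nbr[OF X, of j] j
  by (simp add: rho_def)

lemma cut_energy_fold_rho:
  assumes X: "tri_pos n X"
  shows "t + 1 < n \<Longrightarrow> cut_energy n t (fold (\<lambda>j Y. rho n j Y) [1..<t+1] X) = cut_energy n 0 X"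
proof (induction t)
  case (Suc t)
  let ?F = "fold (\<lambda>j Y. rho n j Y) [1..<t+1] X"
  have "tri_pos n ?F"
    using X Suc.prems by (intro tri_pos_fold_rho) auto
  then have "cut_energy n (Suc t) (rho n (Suc t) ?F) = cut_energy n t ?F"
    using Suc.prems cut_energy_rho by fastforce
  with Suc show ?case by simp
qed simp

lemma cut_energy_bmap:
  assumes Y: "tri_pos n Y" and m: "2 \<le> m" "m < n"
  shows "cut_energy n (n-1) (bmap n m Y) = cut_energy n (n-1) Y"
proof (cases "even (n - m)")
  case False
  then show ?thesis by (simp add: bmap_def)
next
  case True
  define D L v where "D = Y (m+1) (m-1)" and "L = getx n Y m (m-2)" and "v = Y m (m-1)"
  have "D > 0" "v > 0"
    using m by (auto simp: D_def v_def intro: tri_posD[OF Y])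
  have "L > 0"
    using m by (auto simp: L_def getx_def intro: tri_posD[OF Y])
  have L: "L = nbr_sum Y m (m-1) + (if m = 2 then 1 else 0)"
    using m by (auto simp: L_def getx_def nbr_sum_def numeral_2_eq_2)
  have "bmap n m Y = upd2 Y m (m-1) (D * L / v)"
    using True m by (simp add: bmap_def getx_def D_def L_def v_def)
  then have "cut_energy n (n-1) (bmap n m Y) = cut_energy n (n-1) (upd2 Y m (m-1) (D * L / v))"
    by simp
  also have "\<dots> = cut_energy n (n-1) (upd2 Y m (m-1) v)"
  proof (rule cut_energy_upd2_swap)
    show "D * L / v * v * ((if m - 1 + 1 < m then 1 / Y m (m-1+1) else 0) + 1 / Y (m+1) (m-1))
        = nbr_sum Y m (m-1) + (if m = 2 then 1 else 0)"
      unfolding L[symmetric] using \<open>D > 0\<close> \<open>v > 0\<close> m by (simp add: D_def)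
  qed (use m \<open>D > 0\<close> \<open>v > 0\<close> \<open>L > 0\<close> in auto)
  finally show ?thesis
    by (simp add: v_def upd2_self)
qed

lemma bmap_rtri: "3 \<le> n \<Longrightarrow> bmap n n (rtri n X) = scale_nbr n (n-1) X"
  by (auto simp: bmap_def rtri_def getx_def scale_nbr_def nbr_sum_def upd2_def fun_eq_iff numeral_2_eq_2)

lemma cut_energy_rholast:
  assumes X: "tri_pos n X" and n: "3 \<le> n"
  shows "cut_energy n (n-1) (rholast n X) = cut_energy n (n-2) X"
proof -
  have "rev [2..<n+1] = n # rev [2..<n]"
    using n by simp
  then have R: "rholast n X = fold (\<lambda>m Y. bmap n m Y) (rev [2..<n]) (scale_nbr n (n-1) X)"
    using n by (simp add: rholast_def bmap_rtri)
  let ?P = "\<lambda>Y. tri_pos n Y \<and> cut_energy n (n-1) Y = cut_energy n (n-2) X"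
  have "?P (fold (\<lambda>m Y. bmap n m Y) (rev [2..<n]) (scale_nbr n (n-1) X))"
  proof (rule fold_invariant[where P = ?P and Q = "\<lambda>m. 2 \<le> m \<and> m < n"])
    show "?P (scale_nbr n (n-1) X)"
      using cut_energy_scale_nbr[OF X, of "n-1"] n
      by (auto simp: numeral_2_eq_2 intro: tri_pos_scale_nbr[OF X])
  qed (auto simp: tri_pos_bmap cut_energy_bmap[simplified])
  then show ?thesis
    by (simp add: R)
qed

lemma Etri_Rtri:
  assumes X: "tri_pos n X" and n: "3 \<le> n"
  shows "Etri n (Rtri n X) = cut_energy n 0 X"
proof -
  let ?F = "fold (\<lambda>j Y. rho n j Y) [1..<n-1] X"
  have "tri_pos n ?F"
    using X by (intro tri_pos_fold_rho) auto
  moreover have "cut_energy n (n-2) ?F = cut_energy n 0 X"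
    using cut_energy_fold_rho[OF X, of "n-2"] n by (simp add: Suc_diff_Suc numeral_2_eq_2)
  ultimately show ?thesis
    using cut_energy_rholast n by (simp add: Rtri_def Etri_eq_cut_energy)
qed

lemma cut_energy_0:
  assumes "1 \<le> n"
  shows "cut_energy n 0 X = Etri (n-1) X + (\<Sum>j\<in>{1..<n}. 1 / X n j)"
proof -
  have "{1..n} = insert n {1..n-1}"
    using assms by auto
  then have "cut_energy n 0 X = (1 / X 2 1 + (\<Sum>i\<in>{1..n-1}. \<Sum>j\<in>{1..<i}. cut_term n 0 X i j))
      + (\<Sum>j\<in>{1..<n}. cut_term n 0 X n j)"
    using assms by (simp add: cut_energy_def)
  also have "(\<Sum>j\<in>{1..<n}. cut_term n 0 X n j) = (\<Sum>j\<in>{1..<n}. 1 / X n j)"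
    by (intro sum.cong) (auto simp: cut_term_def)
  also have "1 / X 2 1 + (\<Sum>i\<in>{1..n-1}. \<Sum>j\<in>{1..<i}. cut_term n 0 X i j) = Etri (n-1) X"
    unfolding Etri_def
    by (intro arg_cong2[where f = "(+)"] refl sum.cong)
      (auto simp: cut_term_def energy_term_def nbr_sum_def)
  finally show ?thesis .
qed

lemma Etri_cong: "(\<And>i j. i \<le> n \<Longrightarrow> X i j = Y i j) \<Longrightarrow> 2 \<le> n \<Longrightarrow> Etri n X = Etri n Y"
  unfolding Etri_def by (intro arg_cong2[where f = "(+)"] sum.cong) auto

lemma Ttri_Suc:
  assumes "2 \<le> n"
  shows "Ttri (Suc n) X = Rtri (Suc n) (\<lambda>i j. if i < Suc n then Ttri n X i j else X i j)"
proof -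
  obtain m where n: "n = m + 2"
    using le_Suc_ex[OF assms] by (auto simp: add.commute)
  have "Ttri (Suc (Suc (Suc m))) X = Rtri (m+3) (\<lambda>i j. if i < m+3 then Ttri (m+2) X i j else X i j)"
    by (rule Ttri.simps(4))
  then show ?thesis
    unfolding n by (simp add: eval_nat_numeral)
qed

lemma tri_pos_Ttri:
  assumes "2 \<le> n"
  shows "tri_pos n W \<Longrightarrow> tri_pos n (Ttri n W)"
  using assms
proof (induction n rule: nat_induct_at_least)
  case base
  then show ?case by (simp add: numeral_2_eq_2)
next
  case (Suc n)
  then have "tri_pos n (Ttri n W)"
    by (simp add: tri_pos_mono)
  with Suc.prems have "tri_pos (Suc n) (\<lambda>i j. if i < Suc n then Ttri n W i j else W i j)"
    by (auto simp: tri_pos_def)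
  with Suc.hyps show ?case
    by (simp add: Ttri_Suc tri_pos_Rtri)
qed

lemma Etri_Ttri:
  assumes "2 \<le> n"
  shows "tri_pos n W \<Longrightarrow> Etri n (Ttri n W) = (\<Sum>i\<in>{1..n}. \<Sum>j\<in>{1..<i}. 1 / W i j)"
  using assms
proof (induction n rule: nat_induct_at_least)
  case base
  have "{1..2::nat} = {1, 2}" "{1..<2::nat} = {1}"
    by auto
  then show ?case by (simp add: Etri_def numeral_2_eq_2)
next
  case (Suc n)
  define Z where "Z = (\<lambda>i j. if i < Suc n then Ttri n W i j else W i j)"
  have W: "tri_pos n W"
    using Suc.prems by (simp add: tri_pos_mono)
  then have "tri_pos (Suc n) Z"
    using tri_pos_Ttri[OF Suc.hyps W] Suc.prems by (auto simp: Z_def tri_pos_def)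
  then have "Etri (Suc n) (Ttri (Suc n) W) = Etri n Z + (\<Sum>j\<in>{1..<Suc n}. 1 / Z (Suc n) j)"
    using Suc.hyps by (simp add: Ttri_Suc Z_def[symmetric] Etri_Rtri cut_energy_0)
  also have "Etri n Z = Etri n (Ttri n W)"
    using Suc.hyps by (intro Etri_cong) (auto simp: Z_def)
  also have "(\<Sum>j\<in>{1..<Suc n}. 1 / Z (Suc n) j) = (\<Sum>j\<in>{1..<Suc n}. 1 / W (Suc n) j)"
    by (simp add: Z_def)
  finally show ?case
    using Suc.IH[OF W] by (simp add: sum.cl_ivl_Suc)
qed

theorem theorem6p1:
  fixes n :: nat and W :: "nat \<Rightarrow> nat \<Rightarrow> real"
  assumes "n \<ge> 2"
    and "\<And>i j. 1 \<le> j \<Longrightarrow> j < i \<Longrightarrow> i \<le> n \<Longrightarrow> W i j > 0"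
  shows "Etri n (Ttri n W) = (\<Sum>i\<in>{1..n}. \<Sum>j\<in>{1..<i}. 1 / W i j)"
  using Etri_Ttri[OF assms(1)] assms(2) by (simp add: tri_pos_def)

end
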